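(* Let $I\subset\mathbb{R}$ be an interval and let $M,N\colon I^2\to I$ be means. Then the mean-type mapping $(M,N)$ is weakly contractive if and only if the mean-type mapping $(M_2,N_2)$ is diagonally contractive, i.e. $|M_2(x,y)-N_2(x,y)|<|x-y|$ for all $x,y\in I$ with $x\neq y$.
   Context: A function $M\colon I^2\to\mathbb{R}$ is a mean in $I$ if $\min(x,y)\le M(x,y)\le\max(x,y)$ for all $x,y\in I$. For means $M,N\colon I^2\to I$, the mean-type mapping $(M,N)\colon I^2\to I^2$ is $(x,y)\mapsto(M(x,y),N(x,y))$, and for $n\in\mathbb{N}$ the functions $M_n,N_n\colon I^2\to I$ are defined by $(M_n,N_n):=(M,N)^n$ (the $n$-th iterate under composition). The mapping $(M,N)$ is weakly contractive if for all $x,y\in I$ with $x\ne y$ there exists a positive integer $n=n(x,y)$ such that $|M_n(x,y)-N_n(x,y)|<|x-y|$. *)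

theory Defs
  imports "HOL-Analysis.Analysis"
begin

definition is_mean :: "real set \<Rightarrow> (real \<Rightarrow> real \<Rightarrow> real) \<Rightarrow> bool" where
  "is_mean I M \<longleftrightarrow> (\<forall>x\<in>I. \<forall>y\<in>I. min x y \<le> M x y \<and> M x y \<le> max x y)"

definition mean_type_map :: "(real \<Rightarrow> real \<Rightarrow> real) \<Rightarrow> (real \<Rightarrow> real \<Rightarrow> real) \<Rightarrow> real \<times> real \<Rightarrow> real \<times> real" where
  "mean_type_map M N = (\<lambda>(x, y). (M x y, N x y))"

definition iterM :: "(real \<Rightarrow> real \<Rightarrow> real) \<Rightarrow> (real \<Rightarrow> real \<Rightarrow> real) \<Rightarrow> nat \<Rightarrow> real \<Rightarrow> real \<Rightarrow> real" where
  "iterM M N n x y = fst ((mean_type_map M N ^^ n) (x, y))"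

definition iterN :: "(real \<Rightarrow> real \<Rightarrow> real) \<Rightarrow> (real \<Rightarrow> real \<Rightarrow> real) \<Rightarrow> nat \<Rightarrow> real \<Rightarrow> real \<Rightarrow> real" where
  "iterN M N n x y = snd ((mean_type_map M N ^^ n) (x, y))"

definition weakly_contractive :: "real set \<Rightarrow> (real \<Rightarrow> real \<Rightarrow> real) \<Rightarrow> (real \<Rightarrow> real \<Rightarrow> real) \<Rightarrow> bool" where
  "weakly_contractive I M N \<longleftrightarrow>
     (\<forall>x\<in>I. \<forall>y\<in>I. x \<noteq> y \<longrightarrow> (\<exists>n>0. \<bar>iterM M N n x y - iterN M N n x y\<bar> < \<bar>x - y\<bar>))"

definition diagonally_contractive :: "real set \<Rightarrow> (real \<Rightarrow> real \<Rightarrow> real) \<Rightarrow> (real \<Rightarrow> real \<Rightarrow> real) \<Rightarrow> bool" where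
  "diagonally_contractive I M N \<longleftrightarrow>
     (\<forall>x\<in>I. \<forall>y\<in>I. x \<noteq> y \<longrightarrow> \<bar>M x y - N x y\<bar> < \<bar>x - y\<bar>)"

end

theory Submission
  imports Defs
begin

text \<open>Means never increase the gap between the two coordinates, and they can only preserve it
  by returning the pair itself or its swap. If the gap survives two steps of the mean-type
  mapping, the orbit of the pair therefore alternates inside \<open>{p, F p}\<close> and the gap is never
  reduced; so weak contractivity already forces a strict decrease after two steps. The converse
  is immediate with \<open>n = 2\<close>.\<close>

definition gap :: "real \<times> real \<Rightarrow> real" where
  "gap q = \<bar>fst q - snd q\<bar>"

lemma gap_swap [simp]: "gap (prod.swap q) = gap q"
  by (simp add: gap_def abs_minus_commute)

lemma mean_type_map_Pair [simp]: "mean_type_map M N (x, y) = (M x y, N x y)"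
  by (simp add: mean_type_map_def)

lemma gap_funpow_mean_type_map:
  "gap ((mean_type_map M N ^^ n) (x, y)) = \<bar>iterM M N n x y - iterN M N n x y\<bar>"
  by (simp add: gap_def iterM_def iterN_def)

lemma funpow_mean_type_map_in_square:
  assumes "\<forall>x\<in>I. \<forall>y\<in>I. M x y \<in> I \<and> N x y \<in> I" and "q \<in> I \<times> I"
  shows "(mean_type_map M N ^^ n) q \<in> I \<times> I"
  using assms by (induction n) auto

lemma pair_between_eq_or_swap:
  fixes x y u v :: real
  assumes "min x y \<le> u" "u \<le> max x y" "min x y \<le> v" "v \<le> max x y"
    and "\<bar>x - y\<bar> \<le> \<bar>u - v\<bar>"
  shows "(u, v) \<in> {(x, y), (y, x)}"
  using assms by (auto simp: min_def max_def abs_if split: if_splits)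

lemma
  assumes "is_mean I M" "is_mean I N" "q \<in> I \<times> I"
  shows gap_mean_type_map_le: "gap (mean_type_map M N q) \<le> gap q"
    and mean_type_map_eq_or_swap_if_gap_ge:
      "gap q \<le> gap (mean_type_map M N q) \<Longrightarrow> mean_type_map M N q \<in> {q, prod.swap q}"
proof -
  obtain x y where q: "q = (x, y)" "x \<in> I" "y \<in> I"
    using assms(3) by auto
  have "min x y \<le> M x y" "M x y \<le> max x y" "min x y \<le> N x y" "N x y \<le> max x y"
    using assms(1,2) q(2,3) by (auto simp: is_mean_def)
  then show "gap (mean_type_map M N q) \<le> gap q"
    and "gap q \<le> gap (mean_type_map M N q) \<Longrightarrow> mean_type_map M N q \<in> {q, prod.swap q}"
    using pair_between_eq_or_swap[of x y "M x y" "N x y"]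
    by (auto simp: q(1) gap_def min_def max_def abs_if split: if_splits)
qed

lemma funpow_mem_if_period_two:
  assumes "f (f p) \<in> {p, f p}"
  shows "(f ^^ n) p \<in> {p, f p}"
  using assms by (induction n) auto

lemma gap_funpow_eq_if_gap_funpow2_ge:
  assumes "\<forall>x\<in>I. \<forall>y\<in>I. M x y \<in> I \<and> N x y \<in> I" "is_mean I M" "is_mean I N"
    and "p \<in> I \<times> I" and "gap p \<le> gap ((mean_type_map M N ^^ 2) p)"
  shows "gap ((mean_type_map M N ^^ n) p) = gap p"
proof -
  let ?F = "mean_type_map M N"
  have Fp_in: "?F p \<in> I \<times> I"
    using funpow_mean_type_map_in_square[OF assms(1,4), of 1] by simp
  have gap_F2: "gap p \<le> gap (?F (?F p))"
    using assms(5) by (simp add: numeral_2_eq_2)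
  have gap_F2_le: "gap (?F (?F p)) \<le> gap (?F p)"
    by (rule gap_mean_type_map_le[OF assms(2,3) Fp_in])
  have gap_F_le: "gap (?F p) \<le> gap p"
    by (rule gap_mean_type_map_le[OF assms(2,3,4)])
  have Fp: "?F p \<in> {p, prod.swap p}"
    using mean_type_map_eq_or_swap_if_gap_ge[OF assms(2,3,4)] gap_F2 gap_F2_le by linarith
  have "?F (?F p) \<in> {?F p, prod.swap (?F p)}"
    using mean_type_map_eq_or_swap_if_gap_ge[OF assms(2,3) Fp_in] gap_F2 gap_F_le by linarith
  with Fp have "?F (?F p) \<in> {p, ?F p}"
    by (cases p) auto
  then have "(?F ^^ n) p \<in> {p, ?F p}"
    by (rule funpow_mem_if_period_two)
  with Fp show ?thesis
    by auto
qed

theorem mainTheorem2: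
  fixes I :: "real set" and M N :: "real \<Rightarrow> real \<Rightarrow> real"
  assumes "is_interval I"
    and "\<forall>x\<in>I. \<forall>y\<in>I. M x y \<in> I \<and> N x y \<in> I"
    and "is_mean I M" and "is_mean I N"
  shows "weakly_contractive I M N \<longleftrightarrow> diagonally_contractive I (iterM M N 2) (iterN M N 2)"
proof
  assume weak: "weakly_contractive I M N"
  show "diagonally_contractive I (iterM M N 2) (iterN M N 2)"
    unfolding diagonally_contractive_def
  proof (intro ballI impI)
    fix x y assume "x \<in> I" "y \<in> I" "x \<noteq> y"
    then obtain n where "\<bar>iterM M N n x y - iterN M N n x y\<bar> < \<bar>x - y\<bar>"
      using weak by (auto simp: weakly_contractive_def)
    moreover have "\<bar>iterM M N n x y - iterN M N n x y\<bar> = \<bar>x - y\<bar>"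
      if "\<bar>x - y\<bar> \<le> \<bar>iterM M N 2 x y - iterN M N 2 x y\<bar>"
      using gap_funpow_eq_if_gap_funpow2_ge[OF assms(2-4), of "(x, y)" n] that \<open>x \<in> I\<close> \<open>y \<in> I\<close>
      by (simp add: gap_funpow_mean_type_map) (simp add: gap_def)
    ultimately show "\<bar>iterM M N 2 x y - iterN M N 2 x y\<bar> < \<bar>x - y\<bar>"
      by linarith
  qed
next
  assume "diagonally_contractive I (iterM M N 2) (iterN M N 2)"
  then show "weakly_contractive I M N"
    unfolding diagonally_contractive_def weakly_contractive_def
    by (metis zero_less_numeral)
qed

end
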